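(* Let $\lambda\in P^+$. For a POP $\mathcal P$ with bounding sequence $\lambda$, with associated element $v_{\mathcal P}\in\mathbf U(\mathfrak n^-[t])$, the $\mathfrak h$-weight of $v_{\mathcal P}\,w_\lambda$ in $W(\lambda)$ equals the weight of $\mathcal P$.
   Context: Fix $r\ge 1$. Let $\mathfrak{g}=\mathfrak{sp}_{2r}$ be the Lie algebra of complex $2r\times 2r$ matrices $(a_{i,j})$, rows and columns indexed by $1,\dots,r,-r,\dots,-1$, with $a_{i,j}=-\mathrm{sgn}(i)\,\mathrm{sgn}(j)\,a_{-j,-i}$; $E_{i,j}$ are matrix units. The Cartan subalgebra $\mathfrak h$ is spanned by $E_{i,i}-E_{-i,-i}$, $i\in I=\{1,\dots,r\}$, and $\varepsilon_i\in\mathfrak h^*$ satisfy $\langle \varepsilon_i, E_{j,j}-E_{-j,-j}\rangle=\delta_{i,j}$. Root vectors: for $1\le i<j\le r$, $x^+_{i,j-1}=E_{i,j}-E_{-j,-i}$, $x^-_{i,j-1}=E_{j,i}-E_{-i,-j}$, $x^+_{i,\overline{j}}=E_{i,-j}+E_{j,-i}$, $x^-_{i,\overline{j}}=E_{-j,i}+E_{-i,j}$; $x^+_{i,\overline{i}}=E_{i,-i}$, $x^-_{i,\overline{i}}=E_{-i,i}$; $x^\pm_{i,r}:=x^\pm_{i,\overline{r}}$. Let $\mathfrak n^\pm$ be spanned by $x^\pm_{i,j}$ ($1\le i\le j<r$) and $x^\pm_{i,\overline{j}}$ ($1\le i\le j\le r$). Fundamental weights $\omega_i=\varepsilon_1+\dots+\varepsilon_i$;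 $P^+=\sum_i\mathbb N\omega_i$; for $\lambda=\sum m_i\omega_i$ put $\lambda_i=m_i+\dots+m_r$. $\mathfrak g[t]=\mathfrak g\otimes\mathbb C[t]$ is the current algebra. The local Weyl module $W(\lambda)$ is the cyclic $\mathfrak g[t]$-module generated by $w_\lambda$ with relations $\mathfrak n^+[t]w_\lambda=0$, $(h\otimes t^s)w_\lambda=\langle\lambda,h\rangle\delta_{s,0}w_\lambda$, $(x^-_{i,i})^{m_i+1}w_\lambda=0$. A pattern with bounding sequence $\lambda$: integers $\eta^j_i,\lambda^j_i$ ($1\le i\le j\le r$), $\lambda^r_i=\lambda_i$, with $\lambda^j_i\ge\eta^j_i\ge\lambda^j_{i+1}$ ($1\le i\le j\le r$, $\lambda^j_{j+1}=0$) and $\eta^{j+1}_i\ge\lambda^j_i\ge\eta^{j+1}_{i+1}$ ($1\le i\le j<r$). Its weight is $\sum_{j=1}^r a_j\varepsilon_j$ with $a_j=2\sum_{i=1}^j\eta^j_i-\sum_{i=1}^j\lambda^j_i-\sum_{i=1}^{j-1}\lambda^{j-1}_i$. Differences: $\ell_{i,\overline{j}}=\lambda^j_i-\eta^j_i$, $\ell'_{i,\overline{j}}=\eta^j_i-\lambda^j_{i+1}$ ($1\le i\le j\le r$); $\ell_{i,j}=\eta^{j+1}_i-\lambda^j_i$, $\ell'_{i,j}=\lambda^j_i-\eta^{j+1}_{i+1}$ ($1\le i\le j<r$). A partition $\mathbf s=(\mathbf s(1)\le\dots\le\mathbf s(\ell))\in\mathbb N^\ell$ fits into $(\ell,\ell')$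 if $\mathbf s(\ell)\le\ell'$. A POP is a pattern with partitions $\mathbf s_{i,\overline{j}}$ fitting $(\ell_{i,\overline{j}},\ell'_{i,\overline{j}})$ and $\mathbf s_{i,j}$ fitting $(\ell_{i,j},\ell'_{i,j})$; its weight is the weight of its pattern. With $\mathbf{x}(\ell,\mathbf s)=(x\otimes t^{\mathbf s(1)})\cdots(x\otimes t^{\mathbf s(\ell)})$, the associated element is $v_{\mathcal P}=X_{\overline1}X_1\cdots X_{\overline{r-1}}X_{r-1}X_{\overline r}$, $X_{\overline j}=\prod_{i=1}^{j}\mathbf x^-_{i,\overline j}(\ell_{i,\overline j},\mathbf s_{i,\overline j})$, $X_j=\prod_{i=1}^{j}\mathbf x^-_{i,j}(\ell_{i,j},\mathbf s_{i,j})$ (factors in increasing order of $i$). *)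

theory Defs
  imports Complex_Main
begin

text \<open>Matrices of sp_{2r}: rows/columns indexed by the nonzero integers i with |i| \<le> r.\<close>
type_synonym mat = "int \<Rightarrow> int \<Rightarrow> complex"

definition Idx :: "nat \<Rightarrow> int set" where
  "Idx r = {i. 1 \<le> \<bar>i\<bar> \<and> \<bar>i\<bar> \<le> int r}"

definition sp :: "nat \<Rightarrow> mat \<Rightarrow> bool" where
  "sp r X \<longleftrightarrow> (\<forall>i j. (i \<notin> Idx r \<or> j \<notin> Idx r) \<longrightarrow> X i j = 0) \<and>
     (\<forall>i\<in>Idx r. \<forall>j\<in>Idx r. X i j = - of_int (sgn i * sgn j) * X (-j) (-i))"

definition bracket :: "nat \<Rightarrow> mat \<Rightarrow> mat \<Rightarrow> mat" where
  "bracket r X Y = (\<lambda>i j. (\<Sum>k\<in>Idx r. X i k * Y k j) - (\<Sum>k\<in>Idx r. Y i k * X k j))"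

definition cartan :: "nat \<Rightarrow> mat set" where
  "cartan r = {h. sp r h \<and> (\<forall>i j. i \<noteq> j \<longrightarrow> h i j = 0)}"

definition E :: "int \<Rightarrow> int \<Rightarrow> mat" where
  "E a b = (\<lambda>i j. if i = a \<and> j = b then 1 else 0)"

definition madd :: "mat \<Rightarrow> mat \<Rightarrow> mat" where
  "madd X Y = (\<lambda>i j. X i j + Y i j)"

definition msub :: "mat \<Rightarrow> mat \<Rightarrow> mat" where
  "msub X Y = (\<lambda>i j. X i j - Y i j)"

text \<open>Root vectors. xp i j / xm i j stand for x^\<pm>_{i,j} (1 \<le> i \<le> j < r), i.e.
  x^+_{i,j} = E_{i,j+1} - E_{-(j+1),-i};  xpb i j / xmb i j stand for x^\<pm>_{i,\<bar>j}.\<close>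
definition xp :: "nat \<Rightarrow> nat \<Rightarrow> mat" where
  "xp i j = msub (E (int i) (int j + 1)) (E (- (int j + 1)) (- int i))"
definition xm :: "nat \<Rightarrow> nat \<Rightarrow> mat" where
  "xm i j = msub (E (int j + 1) (int i)) (E (- int i) (- (int j + 1)))"
definition xpb :: "nat \<Rightarrow> nat \<Rightarrow> mat" where
  "xpb i j = (if i = j then E (int i) (- int i)
              else madd (E (int i) (- int j)) (E (int j) (- int i)))"
definition xmb :: "nat \<Rightarrow> nat \<Rightarrow> mat" where
  "xmb i j = (if i = j then E (- int i) (int i)
              else madd (E (- int j) (int i)) (E (- int i) (int j)))"

text \<open>x^-_{i,i} with the convention x^-_{r,r} := x^-_{r,\<bar>r}.\<close>
definition xm_diag :: "nat \<Rightarrow> nat \<Rightarrow> mat" where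
  "xm_diag r i = (if i < r then xm i i else xmb r r)"

text \<open>lambda_i = m_i + ... + m_r for lambda = \<Sum> m_i omega_i.\<close>
definition lamb :: "(nat \<Rightarrow> nat) \<Rightarrow> nat \<Rightarrow> nat \<Rightarrow> nat" where
  "lamb m r i = (\<Sum>k=i..r. m k)"

text \<open>A complex representation rho of the current algebra sp_{2r}[t] on the complex
  vector space with scalar multiplication sc; rho x s is the action of x \<otimes> t^s.\<close>
definition g_module :: "nat \<Rightarrow> (complex \<Rightarrow> 'v::ab_group_add \<Rightarrow> 'v) \<Rightarrow> (mat \<Rightarrow> nat \<Rightarrow> 'v \<Rightarrow> 'v) \<Rightarrow> bool" where
  "g_module r sc \<rho> \<longleftrightarrow> vector_space sc \<and>
     (\<forall>x s. sp r x \<longrightarrow> Vector_Spaces.linear sc sc (\<rho> x s)) \<and>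
     (\<forall>x y a b s. sp r x \<longrightarrow> sp r y \<longrightarrow>
        \<rho> (\<lambda>i j. a * x i j + b * y i j) s = (\<lambda>v. sc a (\<rho> x s v) + sc b (\<rho> y s v))) \<and>
     (\<forall>x y s u. sp r x \<longrightarrow> sp r y \<longrightarrow>
        \<rho> (bracket r x y) (s + u) = (\<lambda>v. \<rho> x s (\<rho> y u v) - \<rho> y u (\<rho> x s v)))"

text \<open>w satisfies the defining relations of the generator w_lambda of the local Weyl module.\<close>
definition weyl_gen :: "nat \<Rightarrow> (nat \<Rightarrow> nat) \<Rightarrow> (complex \<Rightarrow> 'v::ab_group_add \<Rightarrow> 'v) \<Rightarrow> (mat \<Rightarrow> nat \<Rightarrow> 'v \<Rightarrow> 'v) \<Rightarrow> 'v \<Rightarrow> bool" where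
  "weyl_gen r m sc \<rho> w \<longleftrightarrow>
     (\<forall>i j s. 1 \<le> i \<and> i \<le> j \<and> j < r \<longrightarrow> \<rho> (xp i j) s w = 0) \<and>
     (\<forall>i j s. 1 \<le> i \<and> i \<le> j \<and> j \<le> r \<longrightarrow> \<rho> (xpb i j) s w = 0) \<and>
     (\<forall>h s. h \<in> cartan r \<longrightarrow>
        \<rho> h s w = (if s = 0 then sc (\<Sum>k=1..r. of_nat (lamb m r k) * h (int k) (int k)) w else 0)) \<and>
     (\<forall>i. 1 \<le> i \<and> i \<le> r \<longrightarrow> (\<rho> (xm_diag r i) 0 ^^ (m i + 1)) w = 0)"

text \<open>Patterns: eta j i = eta^j_i, lam j i = lambda^j_i.\<close>
definition is_pattern :: "nat \<Rightarrow> (nat \<Rightarrow> nat) \<Rightarrow> (nat \<Rightarrow> nat \<Rightarrow> int) \<Rightarrow> (nat \<Rightarrow> nat \<Rightarrow> int) \<Rightarrow> bool" where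
  "is_pattern r m eta lam \<longleftrightarrow>
     (\<forall>i. 1 \<le> i \<and> i \<le> r \<longrightarrow> lam r i = int (lamb m r i)) \<and>
     (\<forall>i j. 1 \<le> i \<and> i \<le> j \<and> j \<le> r \<longrightarrow>
        lam j i \<ge> eta j i \<and> eta j i \<ge> (if i = j then 0 else lam j (i + 1))) \<and>
     (\<forall>i j. 1 \<le> i \<and> i \<le> j \<and> j < r \<longrightarrow>
        eta (j + 1) i \<ge> lam j i \<and> lam j i \<ge> eta (j + 1) (i + 1))"

definition pattern_weight :: "(nat \<Rightarrow> nat \<Rightarrow> int) \<Rightarrow> (nat \<Rightarrow> nat \<Rightarrow> int) \<Rightarrow> nat \<Rightarrow> int" where
  "pattern_weight eta lam j = 2 * (\<Sum>i=1..j. eta j i) - (\<Sum>i=1..j. lam j i) - (\<Sum>i=1..j-1. lam (j-1) i)"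

definition ellb :: "(nat \<Rightarrow> nat \<Rightarrow> int) \<Rightarrow> (nat \<Rightarrow> nat \<Rightarrow> int) \<Rightarrow> nat \<Rightarrow> nat \<Rightarrow> int" where
  "ellb eta lam i j = lam j i - eta j i"
definition ellb' :: "(nat \<Rightarrow> nat \<Rightarrow> int) \<Rightarrow> (nat \<Rightarrow> nat \<Rightarrow> int) \<Rightarrow> nat \<Rightarrow> nat \<Rightarrow> int" where
  "ellb' eta lam i j = eta j i - (if i = j then 0 else lam j (i + 1))"
definition ell :: "(nat \<Rightarrow> nat \<Rightarrow> int) \<Rightarrow> (nat \<Rightarrow> nat \<Rightarrow> int) \<Rightarrow> nat \<Rightarrow> nat \<Rightarrow> int" where
  "ell eta lam i j = eta (j + 1) i - lam j i"
definition ell' :: "(nat \<Rightarrow> nat \<Rightarrow> int) \<Rightarrow> (nat \<Rightarrow> nat \<Rightarrow> int) \<Rightarrow> nat \<Rightarrow> nat \<Rightarrow> int" where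
  "ell' eta lam i j = lam j i - eta (j + 1) (i + 1)"

definition fits :: "nat list \<Rightarrow> int \<Rightarrow> int \<Rightarrow> bool" where
  "fits s l l' \<longleftrightarrow> int (length s) = l \<and> sorted s \<and> (s \<noteq> [] \<longrightarrow> int (last s) \<le> l')"

definition is_POP :: "nat \<Rightarrow> (nat \<Rightarrow> nat) \<Rightarrow> (nat \<Rightarrow> nat \<Rightarrow> int) \<Rightarrow> (nat \<Rightarrow> nat \<Rightarrow> int)
      \<Rightarrow> (nat \<Rightarrow> nat \<Rightarrow> nat list) \<Rightarrow> (nat \<Rightarrow> nat \<Rightarrow> nat list) \<Rightarrow> bool" where
  "is_POP r m eta lam Sb S \<longleftrightarrow> is_pattern r m eta lam \<and>
     (\<forall>i j. 1 \<le> i \<and> i \<le> j \<and> j \<le> r \<longrightarrow> fits (Sb i j) (ellb eta lam i j) (ellb' eta lam i j)) \<and>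
     (\<forall>i j. 1 \<le> i \<and> i \<le> j \<and> j < r \<longrightarrow> fits (S i j) (ell eta lam i j) (ell' eta lam i j))"

text \<open>x(l, s) = (x \<otimes> t^{s(1)}) ... (x \<otimes> t^{s(l)}) acting through rho.\<close>
definition xpow :: "(mat \<Rightarrow> nat \<Rightarrow> 'v \<Rightarrow> 'v) \<Rightarrow> mat \<Rightarrow> nat list \<Rightarrow> 'v \<Rightarrow> 'v" where
  "xpow \<rho> x ss = foldr (\<lambda>s f. \<rho> x s \<circ> f) ss id"

definition Xbar :: "(mat \<Rightarrow> nat \<Rightarrow> 'v \<Rightarrow> 'v) \<Rightarrow> (nat \<Rightarrow> nat \<Rightarrow> nat list) \<Rightarrow> nat \<Rightarrow> 'v \<Rightarrow> 'v" where
  "Xbar \<rho> Sb j = foldr (\<circ>) (map (\<lambda>i. xpow \<rho> (xmb i j) (Sb i j)) [1..<j+1]) id"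

definition Xj :: "(mat \<Rightarrow> nat \<Rightarrow> 'v \<Rightarrow> 'v) \<Rightarrow> (nat \<Rightarrow> nat \<Rightarrow> nat list) \<Rightarrow> nat \<Rightarrow> 'v \<Rightarrow> 'v" where
  "Xj \<rho> S j = foldr (\<circ>) (map (\<lambda>i. xpow \<rho> (xm i j) (S i j)) [1..<j+1]) id"

text \<open>v_P = X_{\<bar>1} X_1 ... X_{\<bar>(r-1)} X_{r-1} X_{\<bar>r}, as an operator.\<close>
definition vP :: "nat \<Rightarrow> (mat \<Rightarrow> nat \<Rightarrow> 'v \<Rightarrow> 'v) \<Rightarrow> (nat \<Rightarrow> nat \<Rightarrow> nat list) \<Rightarrow> (nat \<Rightarrow> nat \<Rightarrow> nat list) \<Rightarrow> 'v \<Rightarrow> 'v" where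
  "vP r \<rho> Sb S = foldr (\<circ>) (concat (map (\<lambda>j. [Xbar \<rho> Sb j, Xj \<rho> S j]) [1..<r]) @ [Xbar \<rho> Sb r]) id"

end

theory Submission
  imports Defs
begin

text \<open>Every h in the Cartan subalgebra acts diagonally on matrices by ad h, and each root vector
  x^-_{i,j} resp. x^-_{i,\<bar>j} is an eigenvector with eigenvalue \<epsilon>_{j+1}(h) - \<epsilon>_i(h)
  resp. -\<epsilon>_i(h) - \<epsilon>_j(h). Since \<rho> is a representation, an operator \<rho> x s with
  [h, x] = \<alpha> x maps the c-eigenspace of \<rho> h 0 into the (c + \<alpha>)-eigenspace. Hence the
  monomial v_P moves the weight \<lambda> of w_\<lambda> by the sum of the weights of its factors, and
  the number of factors x^-_{i,\<bar>j} and x^-_{i,j} is \<lambda>^j_i - \<eta>^j_i resp.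
  \<eta>^{j+1}_i - \<lambda>^j_i. Collecting the coefficient of each \<epsilon>_k gives the weight of
  the pattern.\<close>

lemma finite_Idx: "finite (Idx r)"
  by (rule finite_subset[of _ "{- int r..int r}"]) (auto simp: Idx_def)

lemma bracket_cartan:
  assumes "h \<in> cartan r"
  shows "bracket r h x i j = (h i i - h j j) * x i j"
proof -
  have diag: "h a b = 0" if "a \<noteq> b" for a b
    using assms that by (auto simp: cartan_def)
  have outside: "h a a = 0" if "a \<notin> Idx r" for a
    using assms that by (auto simp: cartan_def sp_def)
  have "(\<Sum>k\<in>Idx r. h i k * x k j) = (\<Sum>k\<in>Idx r. if k = i then h i i * x i j else 0)"
    by (rule sum.cong) (auto simp: diag)
  also have "\<dots> = h i i * x i j"
    using outside[of i] by (simp add: finite_Idx)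
  moreover have "(\<Sum>k\<in>Idx r. x i k * h k j) = (\<Sum>k\<in>Idx r. if k = j then x i j * h j j else 0)"
    by (rule sum.cong) (auto simp: diag)
  moreover have "\<dots> = x i j * h j j"
    using outside[of j] by (simp add: finite_Idx)
  ultimately show ?thesis
    by (simp add: bracket_def algebra_simps)
qed

lemma bracket_cartan_eq_smult:
  assumes "h \<in> cartan r" and "\<And>i j. x i j \<noteq> 0 \<Longrightarrow> h i i - h j j = \<alpha>"
  shows "bracket r h x = (\<lambda>i j. \<alpha> * x i j)"
  using assms by (fastforce simp: fun_eq_iff bracket_cartan)

lemma cartan_minus_diag:
  assumes "h \<in> cartan r" and "1 \<le> k" "k \<le> r"
  shows "h (- int k) (- int k) = - h (int k) (int k)"
proof -
  have "int k \<in> Idx r"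
    using assms(2,3) by (simp add: Idx_def)
  then show ?thesis
    using assms(1,2) by (auto simp: cartan_def sp_def)
qed

lemma xm_nonzero:
  "xm i j a b \<noteq> 0 \<Longrightarrow> (a = int j + 1 \<and> b = int i) \<or> (a = - int i \<and> b = - (int j + 1))"
  by (simp add: xm_def msub_def E_def split: if_split_asm)

lemma xmb_nonzero:
  "xmb i j a b \<noteq> 0 \<Longrightarrow> (a = - int j \<and> b = int i) \<or> (a = - int i \<and> b = int j)"
  by (simp add: xmb_def madd_def E_def split: if_split_asm)

lemma sp_xm:
  assumes "1 \<le> i" "i \<le> j" "j < r"
  shows "sp r (xm i j)"
  unfolding sp_def
proof (intro conjI allI impI ballI)
  fix a b assume "a \<notin> Idx r \<or> b \<notin> Idx r"
  then show "xm i j a b = 0"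
    using xm_nonzero assms by (fastforce simp: Idx_def)
next
  fix a b
  have flip: "xm i j (- b) (- a) = - xm i j a b"
    by (auto simp: xm_def msub_def E_def minus_equation_iff[of a] minus_equation_iff[of b])
  show "xm i j a b = - of_int (sgn a * sgn b) * xm i j (- b) (- a)"
  proof (cases "xm i j a b = 0")
    case False
    then have "sgn a * sgn b = 1"
      using xm_nonzero assms by fastforce
    then show ?thesis by (simp add: flip)
  qed (simp add: flip)
qed

lemma sp_xmb:
  assumes "1 \<le> i" "i \<le> j" "j \<le> r"
  shows "sp r (xmb i j)"
  unfolding sp_def
proof (intro conjI allI impI ballI)
  fix a b assume "a \<notin> Idx r \<or> b \<notin> Idx r"
  then show "xmb i j a b = 0"
    using xmb_nonzero assms by (fastforce simp: Idx_def)
next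
  fix a b
  have flip: "xmb i j (- b) (- a) = xmb i j a b"
    by (auto simp: xmb_def madd_def E_def minus_equation_iff[of a] minus_equation_iff[of b])
  show "xmb i j a b = - of_int (sgn a * sgn b) * xmb i j (- b) (- a)"
  proof (cases "xmb i j a b = 0")
    case False
    then have "sgn a * sgn b = - 1"
      using xmb_nonzero assms by fastforce
    then show ?thesis by (simp add: flip)
  qed (simp add: flip)
qed

lemma bracket_cartan_xm:
  assumes h: "h \<in> cartan r" and "1 \<le> i" "i \<le> j" "j < r"
  shows "bracket r h (xm i j)
    = (\<lambda>a b. (h (int (j + 1)) (int (j + 1)) - h (int i) (int i)) * xm i j a b)"
proof (rule bracket_cartan_eq_smult[OF h])
  fix a b assume "xm i j a b \<noteq> 0"
  then consider "a = int (j + 1)" "b = int i" | "a = - int i" "b = - int (j + 1)"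
    using xm_nonzero by fastforce
  then show "h a a - h b b = h (int (j + 1)) (int (j + 1)) - h (int i) (int i)"
    using cartan_minus_diag[OF h, of i] cartan_minus_diag[OF h, of "j + 1"] assms
    by cases simp_all
qed

lemma bracket_cartan_xmb:
  assumes h: "h \<in> cartan r" and "1 \<le> i" "i \<le> j" "j \<le> r"
  shows "bracket r h (xmb i j) = (\<lambda>a b. - (h (int i) (int i) + h (int j) (int j)) * xmb i j a b)"
proof (rule bracket_cartan_eq_smult[OF h])
  fix a b assume "xmb i j a b \<noteq> 0"
  then consider "a = - int j" "b = int i" | "a = - int i" "b = int j"
    using xmb_nonzero by blast
  then show "h a a - h b b = - (h (int i) (int i) + h (int j) (int j))"
    using cartan_minus_diag[OF h, of i] cartan_minus_diag[OF h, of j] assms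
    by cases simp_all
qed

definition eigen_shift :: "(complex \<Rightarrow> 'v \<Rightarrow> 'v) \<Rightarrow> ('v \<Rightarrow> 'v) \<Rightarrow> ('v \<Rightarrow> 'v) \<Rightarrow> complex \<Rightarrow> bool" where
  "eigen_shift sc T f \<alpha> \<longleftrightarrow> (\<forall>v c. T v = sc c v \<longrightarrow> T (f v) = sc (c + \<alpha>) (f v))"

lemma eigen_shift_id: "eigen_shift sc T id 0"
  by (simp add: eigen_shift_def)

lemma eigen_shift_comp:
  "eigen_shift sc T f \<alpha> \<Longrightarrow> eigen_shift sc T g \<beta> \<Longrightarrow> eigen_shift sc T (f \<circ> g) (\<alpha> + \<beta>)"
  by (simp add: eigen_shift_def add.commute add.left_commute)

lemma eigen_shift_foldr_comp:
  "(\<And>x. x \<in> set xs \<Longrightarrow> eigen_shift sc T (f x) (\<alpha> x))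
    \<Longrightarrow> eigen_shift sc T (foldr (\<circ>) (map f xs) id) (\<Sum>x\<leftarrow>xs. \<alpha> x)"
  by (induction xs) (auto intro: eigen_shift_id eigen_shift_comp)

lemma eigen_shift_xpow:
  "(\<And>s. eigen_shift sc T (\<rho> x s) \<alpha>) \<Longrightarrow> eigen_shift sc T (xpow \<rho> x ss) (of_nat (length ss) * \<alpha>)"
  by (induction ss) (auto simp: xpow_def algebra_simps intro: eigen_shift_id eigen_shift_comp)

lemma eigen_shift_root_vector:
  assumes g: "g_module r sc \<rho>" and "sp r h" "sp r x"
    and root: "bracket r h x = (\<lambda>i j. \<alpha> * x i j)"
  shows "eigen_shift sc (\<rho> h 0) (\<rho> x s) \<alpha>"
  unfolding eigen_shift_def
proof (intro allI impI)
  fix v c assume eigen: "\<rho> h 0 v = sc c v"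
  have vs: "module sc" and lin: "module_hom sc sc (\<rho> x s)"
    using g \<open>sp r x\<close> by (auto simp: g_module_def Vector_Spaces.linear_def module_iff_vector_space)
  have "\<rho> (\<lambda>i j. \<alpha> * x i j + 0 * x i j) s = (\<lambda>v. sc \<alpha> (\<rho> x s v) + sc 0 (\<rho> x s v))"
    using g \<open>sp r x\<close> unfolding g_module_def by blast
  then have smult: "\<rho> (bracket r h x) s v = sc \<alpha> (\<rho> x s v)"
    by (simp add: root module.scale_zero_left[OF vs])
  have "\<rho> (bracket r h x) (0 + s) = (\<lambda>v. \<rho> h 0 (\<rho> x s v) - \<rho> x s (\<rho> h 0 v))"
    using g \<open>sp r h\<close> \<open>sp r x\<close> unfolding g_module_def by blast
  then have "\<rho> h 0 (\<rho> x s v) = \<rho> (bracket r h x) s v + \<rho> x s (\<rho> h 0 v)"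
    by (simp add: fun_eq_iff eq_diff_eq)
  also have "\<dots> = sc \<alpha> (\<rho> x s v) + sc c (\<rho> x s v)"
    using smult eigen module_hom.scale[OF lin] by simp
  also have "\<dots> = sc (c + \<alpha>) (\<rho> x s v)"
    by (simp add: module.scale_left_distrib[OF vs] add.commute)
  finally show "\<rho> h 0 (\<rho> x s v) = sc (c + \<alpha>) (\<rho> x s v)" .
qed

lemma sum_list_map_upt_eq_sum: "(\<Sum>i\<leftarrow>[1..<j+1]. f i) = (\<Sum>i=1..j. f i)"
  by (simp only: interv_sum_list_conv_sum_set_nat set_upt Suc_eq_plus1[symmetric]
      atLeastLessThanSuc_atLeastAtMost)

lemma eigen_shift_Xbar:
  assumes g: "g_module r sc \<rho>" and h: "h \<in> cartan r" and "j \<le> r"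
  shows "eigen_shift sc (\<rho> h 0) (Xbar \<rho> Sb j)
    (\<Sum>i=1..j. of_nat (length (Sb i j)) * - (h (int i) (int i) + h (int j) (int j)))"
proof -
  have "eigen_shift sc (\<rho> h 0) (foldr (\<circ>) (map (\<lambda>i. xpow \<rho> (xmb i j) (Sb i j)) [1..<j+1]) id)
      (\<Sum>i\<leftarrow>[1..<j+1]. of_nat (length (Sb i j)) * - (h (int i) (int i) + h (int j) (int j)))"
    using \<open>j \<le> r\<close> h
    by (intro eigen_shift_foldr_comp eigen_shift_xpow eigen_shift_root_vector[OF g] sp_xmb
        bracket_cartan_xmb) (auto simp: cartan_def)
  then show ?thesis
    unfolding Xbar_def sum_list_map_upt_eq_sum .
qed

lemma eigen_shift_Xj:
  assumes g: "g_module r sc \<rho>" and h: "h \<in> cartan r" and "j < r"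
  shows "eigen_shift sc (\<rho> h 0) (Xj \<rho> S j)
    (\<Sum>i=1..j. of_nat (length (S i j)) * (h (int (j + 1)) (int (j + 1)) - h (int i) (int i)))"
proof -
  have "eigen_shift sc (\<rho> h 0) (foldr (\<circ>) (map (\<lambda>i. xpow \<rho> (xm i j) (S i j)) [1..<j+1]) id)
      (\<Sum>i\<leftarrow>[1..<j+1]. of_nat (length (S i j)) * (h (int (j + 1)) (int (j + 1)) - h (int i) (int i)))"
    using \<open>j < r\<close> h
    by (intro eigen_shift_foldr_comp eigen_shift_xpow eigen_shift_root_vector[OF g] sp_xm
        bracket_cartan_xm) (auto simp: cartan_def)
  then show ?thesis
    unfolding Xj_def sum_list_map_upt_eq_sum .
qed

lemma foldr_comp_concat_pairs:
  "foldr (\<circ>) (concat (map (\<lambda>x. [f x, g x]) xs)) h = foldr (\<circ>) (map (\<lambda>x. f x \<circ> g x) xs) id \<circ> h"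
  by (induction xs) (simp_all add: fun_eq_iff)

lemma vP_eq_foldr_comp:
  "vP r \<rho> Sb S = foldr (\<circ>) (map (\<lambda>j. Xbar \<rho> Sb j \<circ> Xj \<rho> S j) [1..<r]) id \<circ> Xbar \<rho> Sb r"
  by (simp add: vP_def foldr_comp_concat_pairs)

text \<open>With d k read as \<epsilon>_k(h), this is the weight of v_P evaluated at h.\<close>
definition vP_weight ::
    "nat \<Rightarrow> (nat \<Rightarrow> nat \<Rightarrow> nat list) \<Rightarrow> (nat \<Rightarrow> nat \<Rightarrow> nat list) \<Rightarrow> (nat \<Rightarrow> 'a::comm_ring_1) \<Rightarrow> 'a" where
  "vP_weight r Sb S d =
     (\<Sum>j=1..r. \<Sum>i=1..j. of_nat (length (Sb i j)) * - (d i + d j))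
   + (\<Sum>j=1..<r. \<Sum>i=1..j. of_nat (length (S i j)) * (d (j + 1) - d i))"

lemma eigen_shift_vP:
  assumes g: "g_module r sc \<rho>" and h: "h \<in> cartan r"
  shows "eigen_shift sc (\<rho> h 0) (vP r \<rho> Sb S) (vP_weight r Sb S (\<lambda>k. h (int k) (int k)))"
proof -
  let ?d = "\<lambda>k. h (int k) (int k)"
  let ?bar = "\<lambda>j. \<Sum>i=1..j. of_nat (length (Sb i j)) * - (?d i + ?d j)"
  let ?nobar = "\<lambda>j. \<Sum>i=1..j. of_nat (length (S i j)) * (?d (j + 1) - ?d i)"
  have factor: "eigen_shift sc (\<rho> h 0) (Xbar \<rho> Sb j \<circ> Xj \<rho> S j) (?bar j + ?nobar j)"
    if "j \<in> set [1..<r]" for j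
    using that by (intro eigen_shift_comp eigen_shift_Xbar[OF g h] eigen_shift_Xj[OF g h]) auto
  have "eigen_shift sc (\<rho> h 0) (vP r \<rho> Sb S) ((\<Sum>j\<leftarrow>[1..<r]. ?bar j + ?nobar j) + ?bar r)"
    unfolding vP_eq_foldr_comp
    using eigen_shift_foldr_comp[OF factor] eigen_shift_Xbar[OF g h order_refl] by (rule eigen_shift_comp)
  moreover have "(\<Sum>j\<leftarrow>[1..<r]. ?bar j + ?nobar j) + ?bar r = vP_weight r Sb S ?d"
  proof -
    have "(\<Sum>j=1..<r. ?bar j) + ?bar r = (\<Sum>j=1..r. ?bar j)"
      by (cases r) (simp_all add: atLeastLessThanSuc_atLeastAtMost)
    then show ?thesis
      by (simp add: vP_weight_def interv_sum_list_conv_sum_set_nat sum.distrib ac_simps)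
  qed
  ultimately show ?thesis
    by simp
qed

lemma sum_pattern_weight_expansion:
  fixes L E :: "nat \<Rightarrow> nat \<Rightarrow> 'a::comm_ring_1" and d :: "nat \<Rightarrow> 'a"
  shows "(\<Sum>k=1..n. L n k * d k)
       + (\<Sum>j=1..n. \<Sum>i=1..j. (L j i - E j i) * - (d i + d j))
       + (\<Sum>j=1..<n. \<Sum>i=1..j. (E (j + 1) i - L j i) * (d (j + 1) - d i))
     = (\<Sum>k=1..n. (2 * (\<Sum>i=1..k. E k i) - (\<Sum>i=1..k. L k i) - (\<Sum>i=1..k-1. L (k-1) i)) * d k)"
proof (induction n)
  case 0
  then show ?case by simp
next
  case (Suc n)
  have "(\<Sum>j=1..<Suc n. \<Sum>i=1..j. (E (j + 1) i - L j i) * (d (j + 1) - d i))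
     = (\<Sum>j=1..<n. \<Sum>i=1..j. (E (j + 1) i - L j i) * (d (j + 1) - d i))
       + (\<Sum>i=1..n. (E (Suc n) i - L n i) * (d (Suc n) - d i))"
    by (cases n) auto
  then show ?case
    using Suc.IH[symmetric]
    by (simp add: algebra_simps sum.distrib sum_subtractf sum_distrib_left)
qed

lemma is_POP_length_Sb:
  assumes "is_POP r m eta lam Sb S" and "1 \<le> i" "i \<le> j" "j \<le> r"
  shows "int (length (Sb i j)) = lam j i - eta j i"
  using assms by (simp add: is_POP_def fits_def ellb_def)

lemma is_POP_length_S:
  assumes "is_POP r m eta lam Sb S" and "1 \<le> i" "i \<le> j" "j < r"
  shows "int (length (S i j)) = eta (j + 1) i - lam j i"
  using assms by (simp add: is_POP_def fits_def ell_def)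

lemma lamb_add_vP_weight_eq_pattern_weight:
  fixes d :: "nat \<Rightarrow> 'a::comm_ring_1"
  assumes pop: "is_POP r m eta lam Sb S"
  shows "(\<Sum>k=1..r. of_nat (lamb m r k) * d k) + vP_weight r Sb S d
       = (\<Sum>k=1..r. of_int (pattern_weight eta lam k) * d k)"
proof -
  define L E :: "nat \<Rightarrow> nat \<Rightarrow> 'a" where "L j i = of_int (lam j i)" and "E j i = of_int (eta j i)" for j i
  have "of_nat (lamb m r k) = L r k" if "1 \<le> k" "k \<le> r" for k
    using pop that by (simp add: L_def is_POP_def is_pattern_def)
  then have top: "(\<Sum>k=1..r. of_nat (lamb m r k) * d k) = (\<Sum>k=1..r. L r k * d k)"
    by (intro sum.cong) auto
  have "of_nat (length (Sb i j)) = L j i - E j i" if "1 \<le> i" "i \<le> j" "j \<le> r" for i j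
    using is_POP_length_Sb[OF pop that] unfolding L_def E_def by (metis of_int_diff of_int_of_nat_eq)
  moreover have "of_nat (length (S i j)) = E (j + 1) i - L j i" if "1 \<le> i" "i \<le> j" "j < r" for i j
    using is_POP_length_S[OF pop that] unfolding L_def E_def by (metis of_int_diff of_int_of_nat_eq)
  ultimately have "vP_weight r Sb S d
      = (\<Sum>j=1..r. \<Sum>i=1..j. (L j i - E j i) * - (d i + d j))
      + (\<Sum>j=1..<r. \<Sum>i=1..j. (E (j + 1) i - L j i) * (d (j + 1) - d i))"
    unfolding vP_weight_def by (intro arg_cong2[where f = "(+)"] sum.cong refl) auto
  then show ?thesis
    unfolding top using sum_pattern_weight_expansion[of L r d E]
    by (simp add: add.assoc pattern_weight_def L_def E_def)
qed

theorem lemma3p1: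
  fixes r :: nat and m :: "nat \<Rightarrow> nat"
    and sc :: "complex \<Rightarrow> 'v::ab_group_add \<Rightarrow> 'v" and \<rho> :: "mat \<Rightarrow> nat \<Rightarrow> 'v \<Rightarrow> 'v"
    and w :: 'v and eta lam :: "nat \<Rightarrow> nat \<Rightarrow> int" and Sb S :: "nat \<Rightarrow> nat \<Rightarrow> nat list"
  assumes "1 \<le> r"
    and "g_module r sc \<rho>"
    and "weyl_gen r m sc \<rho> w"
    and "is_POP r m eta lam Sb S"
    and "h \<in> cartan r"
  shows "\<rho> h 0 (vP r \<rho> Sb S w)
       = sc (\<Sum>k=1..r. of_int (pattern_weight eta lam k) * h (int k) (int k)) (vP r \<rho> Sb S w)"
proof -
  let ?d = "\<lambda>k. h (int k) (int k)"
  have "\<rho> h 0 w = sc (\<Sum>k=1..r. of_nat (lamb m r k) * ?d k) w"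
    using assms(3,5) by (simp add: weyl_gen_def)
  then have "\<rho> h 0 (vP r \<rho> Sb S w)
      = sc ((\<Sum>k=1..r. of_nat (lamb m r k) * ?d k) + vP_weight r Sb S ?d) (vP r \<rho> Sb S w)"
    using eigen_shift_vP[OF assms(2,5)] by (simp add: eigen_shift_def)
  then show ?thesis
    by (simp only: lamb_add_vP_weight_eq_pattern_weight[OF assms(4)])
qed

end
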